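(* Let $n,m$ be positive integers and $L=L(q,u,z)$ a smooth function on $\mathbb R^n\times\mathbb R^n\times\mathbb R^m$. Let $q:[t_0,t_1]\to\mathbb R^n$ be $C^2$ and let $z:[t_0,t_1]\to\mathbb R^m$, $p:[t_0,t_1]\to\mathbb R^n$, $\mu:[t_0,t_1]\to\mathbb R^m$ be $C^1$ curves such that, with $u=\dot q$ and all derivatives of $L$ evaluated at $(q(t),\dot q(t),z(t))$, $$\dot z_i=L,\qquad \dot p_k=-\Big(\sum_{i=1}^m\mu_i\Big)\frac{\partial L}{\partial q^k},\qquad \dot\mu_i=-\Big(\sum_{j=1}^m\mu_j\Big)\frac{\partial L}{\partial z_i},$$ $$p_k=-\Big(\sum_{i=1}^m\mu_i\Big)\frac{\partial L}{\partial u^k},\qquad \mu_i(t_1)=1,$$ for all $i=1,\dots,m$, $k=1,\dots,n$, $t\in[t_0,t_1]$. Then $q$ satisfies, for all $k$ and $t$, $$\frac{d}{dt}\Big(\frac{\partial L}{\partial\dot q^k}\Big)-\frac{\partial L}{\partial q^k}=\Big(\sum_{i=1}^m\frac{\partial L}{\partial z_i}\Big)\frac{\partial L}{\partial\dot q^k},$$ where $\partial L/\partial\dot q^k$ denotes $\partial L/\partial u^k$ evaluated at $u=\dot q$.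
   Context: These are the Pontryagin maximum principle necessary conditions for the $m$-contact Herglotz variational problem: extremize the terminal cost $\Phi=\sum_{i=1}^mz_i(t_1)$ subject to the control system $\dot q^k=u^k$, $\dot z_i=L(q,u,z)$ ($i=1,\dots,m$) with fixed initial data $q(t_0)=q_0$, $z_i(t_0)=z_i^0$, using the Pontryagin Hamiltonian $H=p_ku^k+\sum_{i=1}^m\mu_iL(q,u,z)$ (adjoint equations $\dot p_k=-\partial H/\partial q^k$, $\dot\mu_i=-\partial H/\partial z_i$, stationarity $\partial H/\partial u^k=0$, transversality $\mu_i(t_1)=1$). The concluding equations are called the $m$-contact Herglotz (Euler–Lagrange) equations. *)

theory Defs
  imports "HOL-Analysis.Analysis"
begin

definition partial_dir :: "('a::real_normed_vector \<Rightarrow> real) \<Rightarrow> 'a \<Rightarrow> 'a \<Rightarrow> real" where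
  "partial_dir f b x = deriv (\<lambda>s. f (x + s *\<^sub>R b)) 0"

fun C_k :: "nat \<Rightarrow> ('a::euclidean_space \<Rightarrow> real) \<Rightarrow> bool" where
  "C_k 0 f = continuous_on UNIV f"
| "C_k (Suc k) f = (continuous_on UNIV f \<and>
      (\<forall>b\<in>Basis. \<forall>x. (\<lambda>s. f (x + s *\<^sub>R b)) differentiable (at 0)) \<and>
      (\<forall>b\<in>Basis. C_k k (partial_dir f b)))"

definition smooth_fun :: "('a::euclidean_space \<Rightarrow> real) \<Rightarrow> bool" where
  "smooth_fun f = (\<forall>k. C_k k f)"

definition smooth_lagrangian ::
  "(real^'n \<Rightarrow> real^'n \<Rightarrow> real^'m \<Rightarrow> real) \<Rightarrow> bool" where
  "smooth_lagrangian L = smooth_fun (\<lambda>(q, u, z). L q u z)"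

definition L_q :: "(real^'n \<Rightarrow> real^'n \<Rightarrow> real^'m \<Rightarrow> real) \<Rightarrow> 'n \<Rightarrow>
    real^'n \<Rightarrow> real^'n \<Rightarrow> real^'m \<Rightarrow> real" where
  "L_q L k q u z = deriv (\<lambda>s. L (q + s *\<^sub>R axis k 1) u z) 0"

definition L_u :: "(real^'n \<Rightarrow> real^'n \<Rightarrow> real^'m \<Rightarrow> real) \<Rightarrow> 'n \<Rightarrow>
    real^'n \<Rightarrow> real^'n \<Rightarrow> real^'m \<Rightarrow> real" where
  "L_u L k q u z = deriv (\<lambda>s. L q (u + s *\<^sub>R axis k 1) z) 0"

definition L_z :: "(real^'n \<Rightarrow> real^'n \<Rightarrow> real^'m \<Rightarrow> real) \<Rightarrow> 'm \<Rightarrow>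
    real^'n \<Rightarrow> real^'n \<Rightarrow> real^'m \<Rightarrow> real" where
  "L_z L i q u z = deriv (\<lambda>s. L q u (z + s *\<^sub>R axis i 1)) 0"

end

theory Submission
  imports Defs
begin

text \<open>The total costate \<open>M = \<Sum>\<^sub>i \<mu>\<^sub>i\<close> satisfies the scalar linear equation
  \<open>M' = -M \<Sum>\<^sub>i \<partial>L/\<partial>z\<^sub>i\<close> with continuous coefficient, so \<open>M\<close> times an exponential
  integrating factor is constant; since \<open>M(t\<^sub>1) = m \<noteq> 0\<close>, \<open>M\<close> never vanishes. The
  stationarity condition then expresses \<open>\<partial>L/\<partial>u\<^sup>k\<close> along the curve as \<open>-p\<^sub>k/M\<close>,
  and differentiating this quotient with the adjoint equations for \<open>p\<close> and \<open>M\<close>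
  gives the Herglotz equations.\<close>

lemma has_real_derivative_vec_nth:
  fixes f :: "real \<Rightarrow> real^'m"
  assumes "(f has_vector_derivative f') (at t within S)"
  shows "((\<lambda>s. f s $ i) has_real_derivative f' $ i) (at t within S)"
  using bounded_linear.has_vector_derivative[OF bounded_linear_vec_nth assms]
  by (simp add: has_real_derivative_iff_has_vector_derivative)

lemma continuous_on_L_z:
  fixes L :: "real^'n \<Rightarrow> real^'n \<Rightarrow> real^'m \<Rightarrow> real"
  assumes "smooth_lagrangian L"
  shows "continuous_on UNIV (\<lambda>(q, u, z). L_z L i q u z)"
proof -
  let ?f = "\<lambda>(q, u, z). L q u z"
  let ?b = "(0::real^'n, 0::real^'n, axis i (1::real))"
  have "?b \<in> Basis"
    by (auto simp: Basis_prod_def image_iff)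
  moreover have "C_k 1 ?f"
    using assms unfolding smooth_lagrangian_def smooth_fun_def by blast
  ultimately have "continuous_on UNIV (partial_dir ?f ?b)"
    by simp
  moreover have "partial_dir ?f ?b = (\<lambda>(q, u, z). L_z L i q u z)"
    by (auto simp: partial_dir_def L_z_def fun_eq_iff)
  ultimately show ?thesis
    by simp
qed

lemma continuous_on_L_z_comp:
  fixes L :: "real^'n \<Rightarrow> real^'n \<Rightarrow> real^'m \<Rightarrow> real"
  assumes "smooth_lagrangian L"
    and "continuous_on T q" "continuous_on T u" "continuous_on T z"
  shows "continuous_on T (\<lambda>t. L_z L i (q t) (u t) (z t))"
proof -
  have "continuous_on T ((\<lambda>(q, u, z). L_z L i q u z) \<circ> (\<lambda>t. (q t, u t, z t)))"
    using continuous_on_L_z[OF assms(1)] assms(2-4)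
    by (intro continuous_on_compose continuous_on_Pair) (auto intro: continuous_on_subset)
  then show ?thesis
    by (simp add: o_def)
qed

lemma linear_ode_solution_nonzero:
  fixes f a :: "real \<Rightarrow> real"
  assumes a: "continuous_on {t0..t1} a"
    and f: "\<forall>s\<in>{t0..t1}. (f has_real_derivative f s * a s) (at s within {t0..t1})"
    and c: "c \<in> {t0..t1}" "f c \<noteq> 0"
    and s: "s \<in> {t0..t1}"
  shows "f s \<noteq> 0"
proof -
  define A where "A x = integral {t0..x} a" for x
  have A: "(A has_real_derivative a x) (at x within {t0..t1})" if "x \<in> {t0..t1}" for x
    using integral_has_vector_derivative[OF a that]
    unfolding A_def by (simp add: has_real_derivative_iff_has_vector_derivative)
  have "((\<lambda>x. f x * exp (- A x)) has_real_derivative 0) (at x within {t0..t1})"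
    if "x \<in> {t0..t1}" for x
    using DERIV_mult[OF f[rule_format, OF that] DERIV_chain2[OF DERIV_exp DERIV_minus[OF A[OF that]]]]
    by simp
  then obtain k where "\<forall>x\<in>{t0..t1}. f x * exp (- A x) = k"
    using has_field_derivative_zero_constant[OF convex_real_interval(5)] by blast
  then have "f s * exp (- A s) = f c * exp (- A c)"
    using c s by simp
  then show ?thesis
    using c(2) by auto
qed

lemma DERIV_costate_quotient:
  fixes p M :: "real \<Rightarrow> real"
  assumes p: "(p has_real_derivative - M t * a) (at t within T)"
    and M: "(M has_real_derivative - M t * b) (at t within T)"
    and M_nz: "M t \<noteq> 0"
  shows "((\<lambda>s. - p s / M s) has_real_derivative a + b * (- p t / M t)) (at t within T)"
proof -
  have "((\<lambda>s. - p s / M s) has_real_derivative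
          (M t * a * M t - (- p t) * (- M t * b)) / (M t * M t)) (at t within T)"
    using DERIV_divide[OF DERIV_minus[OF p] M M_nz] by simp
  also have "(M t * a * M t - (- p t) * (- M t * b)) / (M t * M t) = a + b * (- p t / M t)"
    using M_nz by (simp add: field_simps)
  finally show ?thesis .
qed

theorem mainTheorem8:
  fixes L :: "real^'n \<Rightarrow> real^'n \<Rightarrow> real^'m \<Rightarrow> real"
    and q q' q'' p p' :: "real \<Rightarrow> real^'n"
    and z z' \<mu> \<mu>' :: "real \<Rightarrow> real^'m"
    and t0 t1 :: real
  assumes smooth: "smooth_lagrangian L"
    and interval: "t0 < t1"
    and q_d1: "\<forall>t\<in>{t0..t1}. (q has_vector_derivative q' t) (at t within {t0..t1})"
    and q_d2: "\<forall>t\<in>{t0..t1}. (q' has_vector_derivative q'' t) (at t within {t0..t1})"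
    and q_C2: "continuous_on {t0..t1} q''"
    and z_d: "\<forall>t\<in>{t0..t1}. (z has_vector_derivative z' t) (at t within {t0..t1})"
    and z_C1: "continuous_on {t0..t1} z'"
    and p_d: "\<forall>t\<in>{t0..t1}. (p has_vector_derivative p' t) (at t within {t0..t1})"
    and p_C1: "continuous_on {t0..t1} p'"
    and mu_d: "\<forall>t\<in>{t0..t1}. (\<mu> has_vector_derivative \<mu>' t) (at t within {t0..t1})"
    and mu_C1: "continuous_on {t0..t1} \<mu>'"
    and eq_z: "\<forall>t\<in>{t0..t1}. \<forall>i. z' t $ i = L (q t) (q' t) (z t)"
    and eq_p: "\<forall>t\<in>{t0..t1}. \<forall>k. p' t $ k =
                 - (\<Sum>i\<in>UNIV. \<mu> t $ i) * L_q L k (q t) (q' t) (z t)"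
    and eq_mu: "\<forall>t\<in>{t0..t1}. \<forall>i. \<mu>' t $ i =
                 - (\<Sum>j\<in>UNIV. \<mu> t $ j) * L_z L i (q t) (q' t) (z t)"
    and stat: "\<forall>t\<in>{t0..t1}. \<forall>k. p t $ k =
                 - (\<Sum>i\<in>UNIV. \<mu> t $ i) * L_u L k (q t) (q' t) (z t)"
    and transv: "\<forall>i. \<mu> t1 $ i = 1"
  shows "\<forall>k. \<forall>t\<in>{t0..t1}.
           ((\<lambda>s. L_u L k (q s) (q' s) (z s)) has_real_derivative
              (L_q L k (q t) (q' t) (z t)
               + (\<Sum>i\<in>UNIV. L_z L i (q t) (q' t) (z t)) * L_u L k (q t) (q' t) (z t)))
           (at t within {t0..t1})"
proof (intro allI ballI)
  fix k t
  assume t: "t \<in> {t0..t1}"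
  define M where "M s = (\<Sum>i\<in>UNIV. \<mu> s $ i)" for s
  define S where "S s = (\<Sum>i\<in>UNIV. L_z L i (q s) (q' s) (z s))" for s
  have dM: "(M has_real_derivative M s * - S s) (at s within {t0..t1})" if "s \<in> {t0..t1}" for s
  proof -
    have "(M has_real_derivative (\<Sum>i\<in>UNIV. \<mu>' s $ i)) (at s within {t0..t1})"
      unfolding M_def by (rule DERIV_sum, rule has_real_derivative_vec_nth, rule mu_d[rule_format, OF that])
    moreover have "(\<Sum>i\<in>UNIV. \<mu>' s $ i) = M s * - S s"
      using eq_mu that by (simp add: M_def S_def sum_distrib_left sum_negf)
    ultimately show ?thesis
      by simp
  qed
  have "continuous_on {t0..t1} (\<lambda>s. - S s)"
    unfolding S_def using q_d1 q_d2 z_d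
    by (intro continuous_on_minus continuous_on_sum continuous_on_L_z_comp[OF smooth])
      (auto intro: continuous_on_vector_derivative)
  moreover have "M t1 \<noteq> 0"
    using transv by (simp add: M_def)
  ultimately have M_nz: "M s \<noteq> 0" if "s \<in> {t0..t1}" for s
    using linear_ode_solution_nonzero[of t0 t1 _ M t1 s] dM interval that by auto
  have L_u_eq: "L_u L k (q s) (q' s) (z s) = - p s $ k / M s" if "s \<in> {t0..t1}" for s
    using stat M_nz[OF that] that by (simp add: M_def)
  have "((\<lambda>s. - p s $ k / M s) has_real_derivative
          L_q L k (q t) (q' t) (z t) + S t * (- p t $ k / M t)) (at t within {t0..t1})"
  proof (rule DERIV_costate_quotient)
    show "((\<lambda>s. p s $ k) has_real_derivative - M t * L_q L k (q t) (q' t) (z t))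
        (at t within {t0..t1})"
      using has_real_derivative_vec_nth[OF p_d[rule_format, OF t]] eq_p t by (simp add: M_def)
    show "(M has_real_derivative - M t * S t) (at t within {t0..t1})"
      using dM[OF t] by simp
  qed (rule M_nz[OF t])
  then show "((\<lambda>s. L_u L k (q s) (q' s) (z s)) has_real_derivative
          (L_q L k (q t) (q' t) (z t)
           + (\<Sum>i\<in>UNIV. L_z L i (q t) (q' t) (z t)) * L_u L k (q t) (q' t) (z t)))
          (at t within {t0..t1})"
    unfolding S_def[symmetric] L_u_eq[OF t]
    by (rule has_field_derivative_transform_within[OF _ zero_less_one t]) (simp add: L_u_eq)
qed

end
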